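(* Let $\mathfrak g$ be a real Lie algebra with a nice basis $\{e_1,\dots,e_n\}$, with root matrix $M_\Delta$ and its mod 2 reduction $M_{\Delta,2}$. Let $D=(d_1,\dots,d_n)\in\mathbb Z^n$, let $\delta\in(\mathbb Z_2)^n$ be its mod 2 reduction, and let $\mathfrak g_D=\operatorname{Span}_{\mathbb R}\mathcal B_D\subset\mathfrak g^{\mathbb C}$, where $\mathcal B_D=\{i^{d_1}e_1,\dots,i^{d_n}e_n\}$. Then: (a) if $M_{\Delta,2}\delta=0$, then $\mathfrak g_D$ is a real Lie subalgebra of $\mathfrak g^{\mathbb C}$ and $\mathcal B_D$ is a nice basis of it; in particular $\mathfrak g$ and $\mathfrak g_D$ have the same root matrix; (b) if $\delta$ is the mod 2 reduction of some $D'\in\mathbb Z^n$ with $M_\Delta D'=0$, then $\mathfrak g_D$ is isomorphic to $\mathfrak g$ as a nice Lie algebra; (c) conversely, if $\mathfrak g_D$ is a real Lie subalgebra of $\mathfrak g^{\mathbb C}$, then $M_{\Delta,2}\delta=0$.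
   Context: A nice basis of a Lie algebra $\mathfrak g$ is a basis $\{e_1,\dots,e_n\}$ (dual basis $\{e^i\}$) such that each $[e_i,e_j]$ is a multiple of some $e_k$ and each $e_i\lrcorner\, de^j$ is a multiple of some $e^k$ ($d$ the Chevalley–Eilenberg differential). The root matrix $M_\Delta$ has one row for each triple $(\{i,j\},k)$ such that $[e_i,e_j]$ is a nonzero multiple of $e_k$, with $+1$ in position $k$, $-1$ in positions $i$ and $j$, and $0$ elsewhere. $\mathfrak g^{\mathbb C}$ is the complexification, $i=\sqrt{-1}$. Two nice Lie algebras are isomorphic as nice Lie algebras if there is a Lie algebra isomorphism mapping each element of one nice basis to a nonzero multiple of an element of the other. *)

theory Defs
  imports "HOL-Analysis.Analysis"
begin

text \<open>A real Lie algebra g with basis e_1..e_n (indexed by a finite type 'n) is given by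
  its real structure constants c: [e_i,e_j] = sum_k c i j k e_k.  Its complexification
  g^C is complex^'n with the complex-bilinear extension of the bracket; g sits inside g^C
  as the real span of the standard basis vectors.  All spans/subspaces/independence below
  are over the reals (scaleR).\<close>

definition lie_constants :: "('n::finite \<Rightarrow> 'n \<Rightarrow> 'n \<Rightarrow> real) \<Rightarrow> bool" where
  "lie_constants c \<longleftrightarrow>
     (\<forall>i j k. c i j k = - c j i k) \<and>
     (\<forall>i j l m. (\<Sum>k\<in>UNIV. c i j k * c k l m + c j l k * c k i m + c l i k * c k j m) = 0)"

definition cbr :: "('n::finite \<Rightarrow> 'n \<Rightarrow> 'n \<Rightarrow> real) \<Rightarrow> complex^'n \<Rightarrow> complex^'n \<Rightarrow> complex^'n" where
  "cbr c x y = (\<chi> m. \<Sum>i\<in>UNIV. \<Sum>j\<in>UNIV. x$i * y$j * complex_of_real (c i j m))"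

definition std_basis :: "'n::finite \<Rightarrow> complex^'n" where
  "std_basis k = axis k 1"

definition real_form :: "(complex^'n::finite) set" where
  "real_form = span (range std_basis)"

definition real_lie_subalgebra :: "(complex^'n::finite \<Rightarrow> complex^'n \<Rightarrow> complex^'n) \<Rightarrow> (complex^'n) set \<Rightarrow> bool" where
  "real_lie_subalgebra br V \<longleftrightarrow> subspace V \<and> (\<forall>x\<in>V. \<forall>y\<in>V. br x y \<in> V)"

text \<open>Nice basis b of the real Lie algebra V (bracket br):
  b is a real basis of V; each [b_i,b_j] is a (real) multiple of some b_k; and each
  b_i \<lrcorner> d b^j is a multiple of some b^k, i.e. (since (b_i \<lrcorner> d b^j)(b_l) = - b^j([b_i,b_l]))
  there is k such that the b_j-coordinate of [b_i,b_l] vanishes for all l \<noteq> k.\<close>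
definition nice_basis :: "(complex^'n::finite \<Rightarrow> complex^'n \<Rightarrow> complex^'n) \<Rightarrow> (complex^'n) set \<Rightarrow> ('n \<Rightarrow> complex^'n) \<Rightarrow> bool" where
  "nice_basis br V b \<longleftrightarrow>
     inj b \<and> independent (range b) \<and> span (range b) = V \<and>
     (\<forall>i j. \<exists>k. \<exists>r::real. br (b i) (b j) = r *\<^sub>R b k) \<and>
     (\<forall>i j. \<exists>k. \<forall>l. l \<noteq> k \<longrightarrow> br (b i) (b l) \<in> span (b ` (UNIV - {j})))"

text \<open>Index set of the rows of the root matrix: triples (i,j,k) with [b_i,b_j] a nonzero
  multiple of b_k (stored as ordered pairs; (i,j,k) and (j,i,k) give the same row).\<close>
definition roots :: "(complex^'n::finite \<Rightarrow> complex^'n \<Rightarrow> complex^'n) \<Rightarrow> ('n \<Rightarrow> complex^'n) \<Rightarrow> ('n \<times> 'n \<times> 'n) set" where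
  "roots br b = {(i,j,k). \<exists>r::real. r \<noteq> 0 \<and> br (b i) (b j) = r *\<^sub>R b k}"

definition root_row :: "'n \<Rightarrow> 'n \<Rightarrow> 'n \<Rightarrow> 'n \<Rightarrow> int" where
  "root_row i j k l = (if l = k then 1 else 0) - (if l = i then 1 else 0) - (if l = j then 1 else 0)"

definition root_kernel :: "('n::finite \<times> 'n \<times> 'n) set \<Rightarrow> ('n \<Rightarrow> int) \<Rightarrow> bool" where
  "root_kernel R D \<longleftrightarrow> (\<forall>(i,j,k)\<in>R. (\<Sum>l\<in>UNIV. root_row i j k l * D l) = 0)"

text \<open>M_{\<Delta>,2} \<delta> = 0, with \<delta> \<in> (Z_2)^n represented by 0/1 values.\<close>
definition root_kernel_mod2 :: "('n::finite \<times> 'n \<times> 'n) set \<Rightarrow> ('n \<Rightarrow> int) \<Rightarrow> bool" where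
  "root_kernel_mod2 R \<delta> \<longleftrightarrow> (\<forall>(i,j,k)\<in>R. even (\<Sum>l\<in>UNIV. root_row i j k l * \<delta> l))"

definition mod2 :: "('n \<Rightarrow> int) \<Rightarrow> ('n \<Rightarrow> int)" where
  "mod2 D = (\<lambda>l. D l mod 2)"

definition BD :: "('n::finite \<Rightarrow> int) \<Rightarrow> 'n \<Rightarrow> complex^'n" where
  "BD D k = axis k (\<i> powi D k)"

definition gD :: "('n::finite \<Rightarrow> int) \<Rightarrow> (complex^'n) set" where
  "gD D = span (range (BD D))"

definition nice_iso :: "(complex^'n::finite \<Rightarrow> complex^'n \<Rightarrow> complex^'n) \<Rightarrow> (complex^'n) set \<Rightarrow> ('n \<Rightarrow> complex^'n)
    \<Rightarrow> (complex^'n) set \<Rightarrow> ('n \<Rightarrow> complex^'n) \<Rightarrow> bool" where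
  "nice_iso br V b W b' \<longleftrightarrow>
    (\<exists>f. bij_betw f V W \<and>
         (\<forall>x\<in>V. \<forall>y\<in>V. \<forall>s t::real. f (s *\<^sub>R x + t *\<^sub>R y) = s *\<^sub>R f x + t *\<^sub>R f y) \<and>
         (\<forall>x\<in>V. \<forall>y\<in>V. f (br x y) = br (f x) (f y)) \<and>
         (\<forall>k. \<exists>l. \<exists>r::real. r \<noteq> 0 \<and> f (b k) = r *\<^sub>R b' l))"

end

theory Submission
  imports Defs
begin

(* With [e_i, e_j] = c_ij^k e_k one has
   [i^d_i e_i, i^d_j e_j] = i^(d_i + d_j - d_k) c_ij^k (i^d_k e_k),
   and a power of i is real exactly when its exponent is even.  Hence g_D is closed under the
   bracket iff d_i + d_j - d_k is even along every root, and then B_D inherits niceness and the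
   roots of the standard basis.  If D' = D mod 2 lies in the kernel of M_Delta, the diagonal map
   e_k |-> i^d'_k e_k preserves all brackets and carries g onto g_D' = g_D, with
   i^d'_k e_k = +-(i^d_k e_k). *)

lemma ipow_even: "even n \<Longrightarrow> \<i> powi n = complex_of_real ((-1) powi (n div 2))"
proof -
  assume "even n"
  then have "\<i> powi n = (\<i> powi 2) powi (n div 2)"
    by (metis dvd_mult_div_cancel power_int_mult)
  also have "\<i> powi 2 = (-1::complex)"
    by (simp add: power_int_def)
  finally show ?thesis
    by simp
qed

lemma ipow_real_iff: "\<i> powi n \<in> \<real> \<longleftrightarrow> even n"
proof
  assume "\<i> powi n \<in> \<real>"
  show "even n"
  proof (rule ccontr)
    assume "odd n"
    then have "\<i> powi n = of_real ((-1) powi ((n - 1) div 2)) * \<i>"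
      using power_int_add[of \<i> "n - 1" 1] ipow_even[of "n - 1"] by simp
    then have "\<i> = \<i> powi n / of_real ((-1) powi ((n - 1) div 2))"
      by simp
    also have "\<dots> \<in> \<real>"
      using \<open>\<i> powi n \<in> \<real>\<close> by (rule Reals_divide[OF _ Reals_of_real])
    finally show False
      by (simp add: complex_is_Real_iff)
  qed
qed (metis Reals_of_real ipow_even)

lemma ipow_eq_real_multiple:
  assumes "even (a - b)"
  obtains r :: real where "r \<noteq> 0" and "\<i> powi a = of_real r * \<i> powi b"
proof
  show "(-1::real) powi ((a - b) div 2) \<noteq> 0"
    by simp
  have "\<i> powi a = \<i> powi (a - b) * \<i> powi b"
    by (simp flip: power_int_add)
  then show "\<i> powi a = of_real ((-1) powi ((a - b) div 2)) * \<i> powi b"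
    using ipow_even[OF assms] by simp
qed

lemma ipow_quotient_real_iff: "\<i> powi a * \<i> powi b / \<i> powi d \<in> \<real> \<longleftrightarrow> even (a + b - d)"
  by (simp add: power_int_add power_int_diff flip: ipow_real_iff)

lemma root_row_sum:
  fixes F :: "'n::finite \<Rightarrow> int"
  shows "(\<Sum>l\<in>UNIV. root_row i j k l * F l) = F k - F i - F j"
proof -
  have "(\<Sum>l\<in>UNIV. root_row i j k l * F l)
      = (\<Sum>l\<in>UNIV. (if l = k then F l else 0) - (if l = i then F l else 0) - (if l = j then F l else 0))"
    by (rule sum.cong) (auto simp: root_row_def)
  then show ?thesis
    by (simp add: sum_subtractf)
qed

lemma root_kernel_iff: "root_kernel R D \<longleftrightarrow> (\<forall>(i, j, k)\<in>R. D k = D i + D j)"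
  by (auto simp: root_kernel_def root_row_sum)

lemma mod2_eq_iff: "mod2 D' = mod2 D \<longleftrightarrow> (\<forall>k. even (D' k - D k))"
  by (simp add: mod2_def fun_eq_iff mod_eq_dvd_iff)

lemma root_kernel_mod2_iff:
  "root_kernel_mod2 R (mod2 D) \<longleftrightarrow> (\<forall>(i, j, k)\<in>R. even (D i + D j - D k))"
proof -
  have "even (D k mod 2 - D i mod 2 - D j mod 2) \<longleftrightarrow> even (D i + D j - D k)" for i j k
    by (metis even_add even_diff even_iff_mod_2_eq_zero mod_mod_trivial)
  then show ?thesis
    by (simp add: root_kernel_mod2_def root_row_sum mod2_def)
qed

lemma cbr_axis: "cbr c (axis i a) (axis j b) = (\<chi> m. a * b * of_real (c i j m))"
proof -
  have "axis i a $ p * axis j b $ q * of_real (c p q m)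
      = (if q = j then if p = i then a * b * of_real (c i j m) else 0 else 0)" for p q m
    by (simp add: axis_def)
  then show ?thesis
    by (simp add: cbr_def vec_eq_iff)
qed

lemma cbr_BD_component: "cbr c (BD D i) (BD D j) $ m = \<i> powi D i * \<i> powi D j * of_real (c i j m)"
  by (simp add: BD_def cbr_axis)

lemma cbr_BD:
  assumes "\<And>m. m \<noteq> k \<Longrightarrow> c i j m = 0"
  shows "cbr c (BD D i) (BD D j) = axis k (\<i> powi D i * \<i> powi D j * of_real (c i j k))"
  using assms by (auto simp: vec_eq_iff cbr_BD_component axis_def)

lemma scaleR_BD: "r *\<^sub>R BD D k = axis k (of_real r * \<i> powi D k)"
  by (simp add: BD_def axis_def vec_eq_iff) (simp add: scaleR_conv_of_real)

lemma std_basis_eq_BD: "std_basis = BD (\<lambda>_. 0)"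
  by (simp add: fun_eq_iff std_basis_def BD_def)

lemma real_form_eq_gD: "real_form = gD (\<lambda>_. 0)"
  by (simp add: real_form_def gD_def std_basis_eq_BD)

lemma gD_eq: "gD D = {x. \<forall>k. x$k / \<i> powi D k \<in> \<real>}"
proof (rule antisym)
  have "(r *\<^sub>R x)$k / \<i> powi D k = of_real r * (x$k / \<i> powi D k)" for r x k
    by (simp only: vector_scaleR_component) (simp add: scaleR_conv_of_real)
  then have "subspace {x. \<forall>k. x$k / \<i> powi D k \<in> \<real>}"
    by (auto simp: subspace_def add_divide_distrib) (metis Reals_mult Reals_of_real times_divide_eq_right)
  then show "gD D \<subseteq> {x. \<forall>k. x$k / \<i> powi D k \<in> \<real>}"
    unfolding gD_def by (rule span_minimal[rotated]) (auto simp: BD_def axis_def)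
next
  show "{x. \<forall>k. x$k / \<i> powi D k \<in> \<real>} \<subseteq> gD D"
  proof
    fix x assume x: "x \<in> {x. \<forall>k. x$k / \<i> powi D k \<in> \<real>}"
    have "x = (\<Sum>k\<in>UNIV. Re (x$k / \<i> powi D k) *\<^sub>R BD D k)"
      using x by (simp add: vec_eq_iff sum_component scaleR_BD axis_def)
    also have "\<dots> \<in> gD D"
      unfolding gD_def by (intro span_sum span_scale span_base) auto
    finally show "x \<in> gD D" .
  qed
qed

lemma real_lie_subalgebra_gD_iff:
  "real_lie_subalgebra (cbr c) (gD D) \<longleftrightarrow> (\<forall>i j k. c i j k \<noteq> 0 \<longrightarrow> even (D i + D j - D k))"
proof
  assume sub: "real_lie_subalgebra (cbr c) (gD D)"
  show "\<forall>i j k. c i j k \<noteq> 0 \<longrightarrow> even (D i + D j - D k)"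
  proof (intro allI impI)
    fix i j k assume "c i j k \<noteq> 0"
    have "cbr c (BD D i) (BD D j) \<in> gD D"
      using sub by (simp add: real_lie_subalgebra_def gD_def span_base)
    then have "of_real (c i j k) * (\<i> powi D i * \<i> powi D j / \<i> powi D k) \<in> \<real>"
      by (simp add: gD_eq cbr_BD_component mult_ac)
    then have "\<i> powi D i * \<i> powi D j / \<i> powi D k \<in> \<real>"
      using \<open>c i j k \<noteq> 0\<close> by (metis Reals_divide Reals_of_real nonzero_mult_div_cancel_left of_real_eq_0_iff)
    then show "even (D i + D j - D k)"
      by (simp add: ipow_quotient_real_iff)
  qed
next
  assume parity: "\<forall>i j k. c i j k \<noteq> 0 \<longrightarrow> even (D i + D j - D k)"
  have "cbr c x y \<in> gD D" if "x \<in> gD D" "y \<in> gD D" for x y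
  proof -
    have "x$i * y$j * of_real (c i j m) / \<i> powi D m \<in> \<real>" for i j m
    proof (cases "c i j m = 0")
      case False
      have "x$i * y$j * of_real (c i j m) / \<i> powi D m
          = (x$i / \<i> powi D i) * (y$j / \<i> powi D j) * of_real (c i j m)
            * (\<i> powi D i * \<i> powi D j / \<i> powi D m)"
        by simp
      also have "\<dots> \<in> \<real>"
        using that parity False by (intro Reals_mult) (auto simp: gD_eq ipow_quotient_real_iff)
      finally show ?thesis .
    qed simp
    then show ?thesis
      by (simp add: gD_eq cbr_def sum_divide_distrib sum_in_Reals)
  qed
  then show "real_lie_subalgebra (cbr c) (gD D)"
    by (simp add: real_lie_subalgebra_def gD_def)
qed

definition monomial_brackets :: "('n \<Rightarrow> 'n \<Rightarrow> 'n \<Rightarrow> real) \<Rightarrow> bool" where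
  "monomial_brackets c \<longleftrightarrow> (\<forall>i j. \<exists>k. \<forall>m. m \<noteq> k \<longrightarrow> c i j m = 0)"

(* The coefficient of e^l in e_i \<lrcorner> de^j is -c i l j. *)
definition monomial_duals :: "('n \<Rightarrow> 'n \<Rightarrow> 'n \<Rightarrow> real) \<Rightarrow> bool" where
  "monomial_duals c \<longleftrightarrow> (\<forall>i j. \<exists>k. \<forall>l. l \<noteq> k \<longrightarrow> c i l j = 0)"

lemma BD_bracket_scaleR:
  assumes support: "\<And>m. m \<noteq> k \<Longrightarrow> c i j m = 0"
    and parity: "c i j k \<noteq> 0 \<Longrightarrow> even (D i + D j - D k)"
  obtains r :: real where "cbr c (BD D i) (BD D j) = r *\<^sub>R BD D k" and "r \<noteq> 0 \<longleftrightarrow> c i j k \<noteq> 0"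
proof -
  have bracket: "cbr c (BD D i) (BD D j) = axis k (\<i> powi D i * \<i> powi D j * of_real (c i j k))"
    using support by (rule cbr_BD)
  show ?thesis
  proof (cases "c i j k = 0")
    case True
    then have "cbr c (BD D i) (BD D j) = 0 *\<^sub>R BD D k"
      by (simp add: bracket)
    with True that show ?thesis
      by blast
  next
    case False
    obtain s :: real where "s \<noteq> 0" and s: "\<i> powi (D i + D j) = of_real s * \<i> powi D k"
      using ipow_eq_real_multiple parity[OF False] by blast
    have "cbr c (BD D i) (BD D j) = (s * c i j k) *\<^sub>R BD D k"
      using s by (simp add: bracket scaleR_BD power_int_add mult_ac)
    then show ?thesis
      by (rule that) (use False \<open>s \<noteq> 0\<close> in simp)
  qed
qed

lemma nice_basis_BD:
  assumes brackets: "monomial_brackets c" and duals: "monomial_duals c"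
    and parity: "\<forall>i j k. c i j k \<noteq> 0 \<longrightarrow> even (D i + D j - D k)"
  shows "nice_basis (cbr c) (gD D) (BD D)"
proof -
  have bracket: "\<exists>k r. cbr c (BD D i) (BD D j) = r *\<^sub>R BD D k \<and> (\<forall>m. m \<noteq> k \<longrightarrow> c i j m = 0)
      \<and> (r \<noteq> 0 \<longleftrightarrow> c i j k \<noteq> 0)" for i j
  proof -
    obtain k where k: "\<forall>m. m \<noteq> k \<longrightarrow> c i j m = 0"
      using brackets unfolding monomial_brackets_def by blast
    obtain r where "cbr c (BD D i) (BD D j) = r *\<^sub>R BD D k" "r \<noteq> 0 \<longleftrightarrow> c i j k \<noteq> 0"
      by (rule BD_bracket_scaleR[of k c i j D]) (use k parity in auto)
    with k show ?thesis
      by blast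
  qed
  have "inj (BD D)"
    by (auto simp: inj_def BD_def axis_eq_axis)
  moreover have "independent (range (BD D))"
    by (rule pairwise_orthogonal_independent) (auto simp: pairwise_def orthogonal_def BD_def inner_axis_axis)
  moreover have "\<exists>k. \<forall>l. l \<noteq> k \<longrightarrow> cbr c (BD D i) (BD D l) \<in> span (BD D ` (UNIV - {j}))" for i j
  proof -
    obtain k where k: "\<forall>l. l \<noteq> k \<longrightarrow> c i l j = 0"
      using duals unfolding monomial_duals_def by blast
    have "cbr c (BD D i) (BD D l) \<in> span (BD D ` (UNIV - {j}))" if "l \<noteq> k" for l
    proof -
      obtain k' r where r: "cbr c (BD D i) (BD D l) = r *\<^sub>R BD D k'" "r \<noteq> 0 \<longleftrightarrow> c i l k' \<noteq> 0"
        using bracket by blast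
      then have "r = 0 \<or> k' \<noteq> j"
        using k that by auto
      then show ?thesis
        unfolding r(1) by (auto intro: span_zero span_scale span_base)
    qed
    then show ?thesis
      by blast
  qed
  ultimately show ?thesis
    unfolding nice_basis_def gD_def using bracket by blast
qed

lemma roots_BD:
  assumes brackets: "monomial_brackets c"
    and parity: "\<forall>i j k. c i j k \<noteq> 0 \<longrightarrow> even (D i + D j - D k)"
  shows "roots (cbr c) (BD D) = {(i, j, k). c i j k \<noteq> 0}"
proof -
  have "(i, j, k) \<in> roots (cbr c) (BD D) \<longleftrightarrow> c i j k \<noteq> 0" for i j k
  proof -
    obtain k0 where k0: "\<forall>m. m \<noteq> k0 \<longrightarrow> c i j m = 0"
      using brackets unfolding monomial_brackets_def by blast
    obtain r where r: "cbr c (BD D i) (BD D j) = r *\<^sub>R BD D k0" "r \<noteq> 0 \<longleftrightarrow> c i j k0 \<noteq> 0"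
      by (rule BD_bracket_scaleR[of k0 c i j D]) (use k0 parity in auto)
    have "(\<exists>s. s \<noteq> 0 \<and> r *\<^sub>R BD D k0 = s *\<^sub>R BD D k) \<longleftrightarrow> r \<noteq> 0 \<and> k = k0"
      by (auto simp: scaleR_BD axis_eq_axis)
    with k0 r show ?thesis
      by (auto simp: roots_def)
  qed
  then show ?thesis
    by auto
qed

lemma nice_basis_std_basis_iff:
  "nice_basis (cbr c) real_form std_basis \<longleftrightarrow> monomial_brackets c \<and> monomial_duals c"
proof
  assume nice: "nice_basis (cbr c) real_form std_basis"
  have bracket_component: "cbr c (std_basis i) (std_basis j) $ m = of_real (c i j m)" for i j m
    by (simp add: std_basis_eq_BD cbr_BD_component)
  have "\<exists>k. \<forall>m. m \<noteq> k \<longrightarrow> c i j m = 0" for i j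
  proof -
    obtain k and r :: real where "cbr c (std_basis i) (std_basis j) = r *\<^sub>R std_basis k"
      using nice unfolding nice_basis_def by blast
    then have coord: "of_real (c i j m) = (r *\<^sub>R std_basis k) $ m" for m
      by (metis bracket_component)
    have "c i j m = 0" if "m \<noteq> k" for m
      using coord[of m] that by (simp add: std_basis_def axis_def)
    then show ?thesis
      by blast
  qed
  moreover have "\<exists>k. \<forall>l. l \<noteq> k \<longrightarrow> c i l j = 0" for i j
  proof -
    obtain k where k: "\<forall>l. l \<noteq> k \<longrightarrow> cbr c (std_basis i) (std_basis l) \<in> span (std_basis ` (UNIV - {j}))"
      using nice unfolding nice_basis_def by blast
    have "subspace {x. x$j = (0::complex)}"
      by (auto simp: subspace_def)
    then have "span (std_basis ` (UNIV - {j})) \<subseteq> {x. x$j = 0}"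
      by (rule span_minimal[rotated]) (auto simp: std_basis_def axis_def)
    with k have "cbr c (std_basis i) (std_basis l) $ j = 0" if "l \<noteq> k" for l
      using that by blast
    then have "c i l j = 0" if "l \<noteq> k" for l
      using that by (simp add: bracket_component)
    then show ?thesis
      by blast
  qed
  ultimately show "monomial_brackets c \<and> monomial_duals c"
    by (simp add: monomial_brackets_def monomial_duals_def)
next
  assume "monomial_brackets c \<and> monomial_duals c"
  then show "nice_basis (cbr c) real_form std_basis"
    using nice_basis_BD[of c "\<lambda>_. 0"] by (simp add: std_basis_eq_BD real_form_eq_gD)
qed

definition twist :: "('n::finite \<Rightarrow> int) \<Rightarrow> complex^'n \<Rightarrow> complex^'n" where
  "twist D x = (\<chi> k. \<i> powi D k * x$k)"

lemma twist_std_basis: "twist D (std_basis k) = BD D k"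
  by (simp add: twist_def std_basis_def BD_def axis_def vec_eq_iff)

lemma twist_scaleR_add: "twist D (s *\<^sub>R x + t *\<^sub>R y) = s *\<^sub>R twist D x + t *\<^sub>R twist D y"
  by (simp add: twist_def vec_eq_iff algebra_simps)

lemma twist_cbr:
  assumes "\<And>i j m. c i j m \<noteq> 0 \<Longrightarrow> D m = D i + D j"
  shows "twist D (cbr c x y) = cbr c (twist D x) (twist D y)"
proof -
  have termwise: "\<i> powi D m * (x$i * y$j * of_real (c i j m))
      = (\<i> powi D i * x$i) * (\<i> powi D j * y$j) * of_real (c i j m)" for i j m
    by (cases "c i j m = 0") (simp_all add: assms power_int_add mult_ac)
  show ?thesis
    by (simp add: twist_def cbr_def vec_eq_iff sum_distrib_left termwise)
qed

lemma bij_betw_twist: "bij_betw (twist D) real_form (gD D)"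
proof (rule bij_betw_imageI)
  show "inj_on (twist D) real_form"
    by (auto simp: inj_on_def twist_def vec_eq_iff)
  have real_form_eq: "real_form = {x. \<forall>k. x$k \<in> \<real>}"
    by (simp add: real_form_eq_gD gD_eq)
  show "twist D ` real_form = gD D"
  proof
    show "twist D ` real_form \<subseteq> gD D"
      by (auto simp: real_form_eq gD_eq twist_def)
    show "gD D \<subseteq> twist D ` real_form"
    proof
      fix y assume "y \<in> gD D"
      then have "(\<chi> k. y$k / \<i> powi D k) \<in> real_form"
        by (simp add: real_form_eq gD_eq)
      moreover have "y = twist D (\<chi> k. y$k / \<i> powi D k)"
        by (simp add: twist_def vec_eq_iff)
      ultimately show "y \<in> twist D ` real_form"
        by blast
    qed
  qed
qed

lemma BD_eq_scaleR_BD: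
  assumes "even (D' k - D k)"
  obtains r :: real where "r \<noteq> 0" and "BD D' k = r *\<^sub>R BD D k"
  using ipow_eq_real_multiple[OF assms] by (metis BD_def scaleR_BD)

lemma gD_eq_if_mod2_eq:
  assumes "mod2 D' = mod2 D"
  shows "gD D' = gD D"
proof -
  have "gD E \<subseteq> gD F" if "mod2 E = mod2 F" for E F
  proof -
    have "BD E k \<in> gD F" for k
    proof -
      obtain r where "BD E k = r *\<^sub>R BD F k"
        using BD_eq_scaleR_BD \<open>mod2 E = mod2 F\<close> by (metis mod2_eq_iff)
      then show ?thesis
        by (simp add: gD_def span_base span_scale)
    qed
    then show ?thesis
      unfolding gD_def[of E] by (intro span_minimal) (auto simp: gD_def)
  qed
  with assms show ?thesis
    by (metis order_antisym)
qed

lemma nice_iso_gD: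
  assumes kernel: "\<And>i j m. c i j m \<noteq> 0 \<Longrightarrow> D' m = D' i + D' j"
    and mod2: "mod2 D' = mod2 D"
  shows "nice_iso (cbr c) real_form std_basis (gD D) (BD D)"
proof -
  have "\<exists>l r. r \<noteq> 0 \<and> twist D' (std_basis k) = r *\<^sub>R BD D l" for k
    using BD_eq_scaleR_BD mod2 by (metis mod2_eq_iff twist_std_basis)
  then show ?thesis
    unfolding nice_iso_def using bij_betw_twist[of D'] gD_eq_if_mod2_eq[OF mod2]
    by (intro exI[of _ "twist D'"]) (simp add: twist_scaleR_add twist_cbr[OF kernel])
qed

theorem proposition1p12:
  fixes c :: "'n::finite \<Rightarrow> 'n \<Rightarrow> 'n \<Rightarrow> real" and D :: "'n \<Rightarrow> int"
  assumes "lie_constants c"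
    and "nice_basis (cbr c) real_form std_basis"
  shows "(root_kernel_mod2 (roots (cbr c) std_basis) (mod2 D) \<longrightarrow>
            real_lie_subalgebra (cbr c) (gD D) \<and> nice_basis (cbr c) (gD D) (BD D) \<and>
            roots (cbr c) (BD D) = roots (cbr c) std_basis)
       \<and> ((\<exists>D'. mod2 D' = mod2 D \<and> root_kernel (roots (cbr c) std_basis) D') \<longrightarrow>
            nice_iso (cbr c) real_form std_basis (gD D) (BD D))
       \<and> (real_lie_subalgebra (cbr c) (gD D) \<longrightarrow>
            root_kernel_mod2 (roots (cbr c) std_basis) (mod2 D))"
proof -
  from assms(2) have brackets: "monomial_brackets c" and duals: "monomial_duals c"
    by (simp_all add: nice_basis_std_basis_iff)
  have roots_std: "roots (cbr c) std_basis = {(i, j, k). c i j k \<noteq> 0}"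
    using roots_BD[OF brackets, of "\<lambda>_. 0"] by (simp add: std_basis_eq_BD)
  have parity_iff: "root_kernel_mod2 (roots (cbr c) std_basis) (mod2 D)
      \<longleftrightarrow> (\<forall>i j k. c i j k \<noteq> 0 \<longrightarrow> even (D i + D j - D k))"
    by (auto simp: roots_std root_kernel_mod2_iff)
  have kernel_iff: "root_kernel (roots (cbr c) std_basis) D'
      \<longleftrightarrow> (\<forall>i j m. c i j m \<noteq> 0 \<longrightarrow> D' m = D' i + D' j)" for D'
    by (auto simp: roots_std root_kernel_iff)
  show ?thesis
  proof (intro conjI impI)
    assume "root_kernel_mod2 (roots (cbr c) std_basis) (mod2 D)"
    then have parity: "\<forall>i j k. c i j k \<noteq> 0 \<longrightarrow> even (D i + D j - D k)"
      using parity_iff by blast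
    then show "real_lie_subalgebra (cbr c) (gD D)"
      using real_lie_subalgebra_gD_iff by blast
    show "nice_basis (cbr c) (gD D) (BD D)"
      using nice_basis_BD[OF brackets duals parity] .
    show "roots (cbr c) (BD D) = roots (cbr c) std_basis"
      unfolding roots_BD[OF brackets parity] roots_std ..
  next
    assume "\<exists>D'. mod2 D' = mod2 D \<and> root_kernel (roots (cbr c) std_basis) D'"
    then show "nice_iso (cbr c) real_form std_basis (gD D) (BD D)"
      using kernel_iff nice_iso_gD by metis
  next
    assume "real_lie_subalgebra (cbr c) (gD D)"
    then show "root_kernel_mod2 (roots (cbr c) std_basis) (mod2 D)"
      using real_lie_subalgebra_gD_iff parity_iff by blast
  qed
qed

end
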